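(* Let $A\in\mathbb{R}^{m\times n}$, $b\in\mathbb{R}^m$, and $c,c'\in\mathbb{R}^n$. Let $s'$ be an optimal dual solution to $\operatorname{LP}(c')$, i.e. $s'=c'-A^\top y'\ge\mathbb{0}$ for some $y'\in\mathbb{R}^m$ with $(y',s')$ optimal for the dual $\max\{\langle b,y\rangle: A^\top y+s=c',\ s\ge\mathbb{0}\}$. If $c\in\ker(A)$, $\|c\|_2=1$, and $\|c-c'\|_\infty<1/(\sqrt n(m+2)\kappa_A)$, then there exists an index $j\in[n]$ with \[s'_j>\frac{m+1}{\sqrt n(m+2)}.\]
   Context: $\operatorname{LP}(\tilde c)$ denotes $\min\{\langle\tilde c,x\rangle: Ax=b,\ x\ge\mathbb{0}\}$. An elementary vector of $\ker(A)$ is a nonzero $g\in\ker(A)$ with inclusion-minimal support among nonzero vectors of $\ker(A)$; the circuit imbalance is $\kappa_A=\max\{|g_i|/|g_j|: g \text{ elementary},\ i,j\in\mathrm{supp}(g)\}$ (so $\kappa_A\ge 1$). *)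

theory Defs
  imports "HOL-Analysis.Analysis"
begin

text \<open>Matrices A in R^{m x n} are rendered as real^'n^'m; m = CARD('m), n = CARD('n).\<close>

definition supp_vec :: "real^'n \<Rightarrow> 'n set" where
  "supp_vec g = {i. g $ i \<noteq> 0}"

definition elementary_vec :: "real^'n^'m \<Rightarrow> real^'n \<Rightarrow> bool" where
  "elementary_vec A g \<longleftrightarrow> A *v g = 0 \<and> g \<noteq> 0 \<and>
     (\<forall>h. A *v h = 0 \<and> h \<noteq> 0 \<and> supp_vec h \<subseteq> supp_vec g \<longrightarrow> supp_vec h = supp_vec g)"

definition circuit_imbalance :: "real^'n^'m \<Rightarrow> real" where
  "circuit_imbalance A = Sup {\<bar>g $ i\<bar> / \<bar>g $ j\<bar> | g i j.
      elementary_vec A g \<and> i \<in> supp_vec g \<and> j \<in> supp_vec g}"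

definition dual_feasible :: "real^'n^'m \<Rightarrow> real^'n \<Rightarrow> real^'m \<Rightarrow> real^'n \<Rightarrow> bool" where
  "dual_feasible A c y s \<longleftrightarrow> transpose A *v y + s = c \<and> (\<forall>i. s $ i \<ge> 0)"

definition dual_optimal :: "real^'n^'m \<Rightarrow> real^'m \<Rightarrow> real^'n \<Rightarrow> real^'m \<Rightarrow> real^'n \<Rightarrow> bool" where
  "dual_optimal A b c y s \<longleftrightarrow> dual_feasible A c y s \<and>
     (\<forall>y2 s2. dual_feasible A c y2 s2 \<longrightarrow> b \<bullet> y2 \<le> b \<bullet> y)"

end

theory Submission
  imports Defs
begin

(* Since c lies in the kernel of A, it is orthogonal to the row space of A, so the dual slack
   s' = c' - A^T y' satisfies <c, s'> = <c, c'> = 1 - <c, c - c'>. The l1-norm of c is at most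
   sqrt n, so the perturbation term is below 1/((m+2) kappa_A) <= 1/(m+2), using kappa_A >= 1
   (the kernel is nontrivial). Hence <c, s'> > (m+1)/(m+2), whereas <c, s'> <= sqrt n max_j s'_j. *)

lemma elementary_vec_proportional:
  fixes A :: "real^'n^'m"
  assumes g: "elementary_vec A g" and h: "elementary_vec A h"
    and supp_eq: "supp_vec g = supp_vec h"
  obtains t where "t \<noteq> 0" and "g = t *s h"
proof -
  have Ag: "A *v g = 0" and Ah: "A *v h = 0" and "h \<noteq> 0"
    using g h unfolding elementary_vec_def by blast+
  then obtain i where hi: "h $ i \<noteq> 0" by (metis vec_eq_iff zero_index)
  then have i_supp: "i \<in> supp_vec g" using supp_eq unfolding supp_vec_def by blast
  define t where "t = g $ i / h $ i"
  define d where "d = g - t *s h"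
  have "A *v (t *s h) = t *s (A *v h)"
    unfolding scalar_mult_eq_scaleR by (rule matrix_vector_mult_scaleR)
  then have "A *v d = 0"
    by (simp add: d_def matrix_vector_mult_diff_distrib Ag Ah)
  moreover have "supp_vec d \<subseteq> supp_vec g"
  proof
    fix k assume "k \<in> supp_vec d"
    then have "g $ k \<noteq> 0 \<or> h $ k \<noteq> 0" by (auto simp: supp_vec_def d_def)
    then show "k \<in> supp_vec g" using supp_eq unfolding supp_vec_def by blast
  qed
  moreover have "i \<notin> supp_vec d"
    using hi by (simp add: supp_vec_def d_def t_def)
  ultimately have "d = 0"
    using g i_supp unfolding elementary_vec_def by blast
  then have "g = t *s h" by (simp add: d_def)
  moreover have "t \<noteq> 0" using i_supp hi by (simp add: t_def supp_vec_def)
  ultimately show thesis using that by blast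
qed

(* The ratios depend only on the support, so there are finitely many; this is what makes the
   Sup in circuit_imbalance an upper bound of its elements. *)
lemma finite_circuit_ratios:
  fixes A :: "real^'n^'m"
  shows "finite {\<bar>g $ i\<bar> / \<bar>g $ j\<bar> | g i j.
    elementary_vec A g \<and> i \<in> supp_vec g \<and> j \<in> supp_vec g}" (is "finite ?R")
proof -
  define rep where "rep S = (SOME g. elementary_vec A g \<and> supp_vec g = S)" for S
  have "?R \<subseteq> (\<lambda>(S, i, j). \<bar>rep S $ i\<bar> / \<bar>rep S $ j\<bar>) ` UNIV"
  proof
    fix x assume "x \<in> ?R"
    then obtain g i j where x: "x = \<bar>g $ i\<bar> / \<bar>g $ j\<bar>" and g: "elementary_vec A g"
      by blast
    define r where "r = rep (supp_vec g)"
    have "elementary_vec A r \<and> supp_vec r = supp_vec g"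
      unfolding r_def rep_def by (rule someI[of _ g]) (use g in simp)
    then obtain t where "t \<noteq> 0" "g = t *s r"
      using elementary_vec_proportional[OF g] by metis
    then have "\<bar>g $ k\<bar> = \<bar>t\<bar> * \<bar>r $ k\<bar>" for k
      by (simp add: abs_mult)
    then have "x = \<bar>r $ i\<bar> / \<bar>r $ j\<bar>"
      using \<open>t \<noteq> 0\<close> by (simp add: x)
    then show "x \<in> (\<lambda>(S, i, j). \<bar>rep S $ i\<bar> / \<bar>rep S $ j\<bar>) ` UNIV"
      by (intro image_eqI[where x = "(supp_vec g, i, j)"]) (auto simp: r_def)
  qed
  then show ?thesis by (rule finite_subset) simp
qed

lemma elementary_vec_exists:
  fixes A :: "real^'n^'m"
  assumes "A *v c = 0" and "c \<noteq> 0"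
  obtains g where "elementary_vec A g"
proof -
  let ?P = "\<lambda>g::real^'n. A *v g = 0 \<and> g \<noteq> 0"
  obtain g where g: "?P g" and g_min: "\<And>h. ?P h \<Longrightarrow> card (supp_vec g) \<le> card (supp_vec h)"
    using ex_has_least_nat[of ?P c "\<lambda>g. card (supp_vec g)"] assms by blast
  have "elementary_vec A g"
    unfolding elementary_vec_def
  proof (intro conjI allI impI)
    fix h assume "A *v h = 0 \<and> h \<noteq> 0 \<and> supp_vec h \<subseteq> supp_vec g"
    then show "supp_vec h = supp_vec g"
      using g_min by (metis card_seteq finite)
  qed (use g in auto)
  then show thesis by (rule that)
qed

lemma circuit_imbalance_ge_1:
  fixes A :: "real^'n^'m"
  assumes "A *v c = 0" and "c \<noteq> 0"
  shows "circuit_imbalance A \<ge> 1"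
proof -
  obtain g where g: "elementary_vec A g" using elementary_vec_exists[OF assms] .
  then obtain i where gi: "g $ i \<noteq> 0"
    unfolding elementary_vec_def by (metis vec_eq_iff zero_index)
  have "1 = \<bar>g $ i\<bar> / \<bar>g $ i\<bar>" using gi by simp
  then have "1 \<in> {\<bar>g $ i\<bar> / \<bar>g $ j\<bar> | g i j.
      elementary_vec A g \<and> i \<in> supp_vec g \<and> j \<in> supp_vec g}"
    using g gi unfolding supp_vec_def by blast
  then show ?thesis
    unfolding circuit_imbalance_def
    by (intro cSup_upper bdd_above_finite finite_circuit_ratios)
qed

lemma sum_abs_le_sqrt_card_norm:
  fixes x :: "real^'n"
  shows "(\<Sum>i\<in>UNIV. \<bar>x $ i\<bar>) \<le> sqrt (real CARD('n)) * norm x"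
proof -
  have "(\<Sum>i\<in>UNIV. \<bar>x $ i\<bar>) = (\<chi> i. \<bar>x $ i\<bar>) \<bullet> (\<chi> i. 1)"
    by (simp add: inner_vec_def)
  also have "\<dots> \<le> norm (\<chi> i. \<bar>x $ i\<bar>) * norm ((\<chi> i. 1) :: real^'n)"
    by (rule norm_cauchy_schwarz)
  also have "norm (\<chi> i. \<bar>x $ i\<bar>) = norm x"
    by (simp add: norm_vec_def)
  also have "norm ((\<chi> i. 1) :: real^'n) = sqrt (real CARD('n))"
    by (simp add: norm_vec_def L2_set_def)
  finally show ?thesis by (simp add: mult.commute)
qed

lemma abs_inner_le_sqrt_card_norm_bound:
  fixes x y :: "real^'n"
  assumes "\<And>i. \<bar>y $ i\<bar> \<le> B"
  shows "\<bar>x \<bullet> y\<bar> \<le> sqrt (real CARD('n)) * norm x * B"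
proof -
  have "\<bar>x \<bullet> y\<bar> = \<bar>\<Sum>i\<in>UNIV. x $ i * y $ i\<bar>"
    by (simp add: inner_vec_def)
  also have "\<dots> \<le> (\<Sum>i\<in>UNIV. \<bar>x $ i\<bar> * \<bar>y $ i\<bar>)"
    unfolding abs_mult [symmetric] by (rule sum_abs)
  also have "\<dots> \<le> (\<Sum>i\<in>UNIV. \<bar>x $ i\<bar>) * B"
    unfolding sum_distrib_right by (intro sum_mono mult_left_mono assms) simp
  also have "\<dots> \<le> sqrt (real CARD('n)) * norm x * B"
    using assms[of undefined] by (intro mult_right_mono sum_abs_le_sqrt_card_norm) simp
  finally show ?thesis .
qed

lemma dual_feasible_inner_kernel:
  fixes A :: "real^'n^'m"
  assumes "dual_feasible A c' y s" and "A *v c = 0"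
  shows "c \<bullet> s = c \<bullet> c'"
proof -
  have "c \<bullet> (transpose A *v y) = (A *v c) \<bullet> y"
    by (metis transpose_matrix_vector dot_lmul_matrix inner_commute)
  moreover have "s = c' - transpose A *v y"
    using assms(1) unfolding dual_feasible_def by (simp add: algebra_simps)
  ultimately show ?thesis
    using assms(2) by (simp add: inner_diff_right)
qed

theorem lemma2p10:
  fixes A :: "real^'n^'m" and b :: "real^'m" and c c' s' :: "real^'n"
  assumes "\<exists>y'. dual_optimal A b c' y' s'"
    and "A *v c = 0"
    and "norm c = 1"
    and "infnorm (c - c') < 1 / (sqrt (real CARD('n)) * (real CARD('m) + 2) * circuit_imbalance A)"
  shows "\<exists>j. s' $ j > (real CARD('m) + 1) / (sqrt (real CARD('n)) * (real CARD('m) + 2))"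
proof (rule ccontr)
  let ?n = "sqrt (real CARD('n))" and ?m = "real CARD('m)"
  assume "\<not> ?thesis"
  then have s'_le: "\<bar>s' $ j\<bar> \<le> (?m + 1) / (?n * (?m + 2))" for j
    using assms(1) by (auto simp: dual_optimal_def dual_feasible_def not_less)
  obtain y' where "dual_feasible A c' y' s'" using assms(1) by (auto simp: dual_optimal_def)
  then have "c \<bullet> s' = 1 - c \<bullet> (c - c')"
    using assms(2,3) by (simp add: dual_feasible_inner_kernel inner_diff_right dot_square_norm)
  moreover have "\<bar>c \<bullet> (c - c')\<bar> \<le> ?n * infnorm (c - c')"
    using abs_inner_le_sqrt_card_norm_bound[of "c - c'" _ c, OF component_le_infnorm_cart] assms(3)
    by simp
  moreover have "?n * infnorm (c - c') < 1 / (?m + 2)"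
  proof -
    have "circuit_imbalance A \<ge> 1"
      using circuit_imbalance_ge_1[OF assms(2)] assms(3) by force
    have "?n * infnorm (c - c') < ?n * (1 / (?n * (?m + 2) * circuit_imbalance A))"
      using assms(4) by (intro mult_strict_left_mono) auto
    also have "\<dots> = 1 / ((?m + 2) * circuit_imbalance A)"
      by simp
    also have "\<dots> \<le> 1 / (?m + 2)"
      using \<open>circuit_imbalance A \<ge> 1\<close> by (intro divide_left_mono) auto
    finally show ?thesis .
  qed
  moreover have "c \<bullet> s' \<le> (?m + 1) / (?m + 2)"
    using abs_inner_le_sqrt_card_norm_bound[OF s'_le, of c] assms(3) by simp
  moreover have "1 - 1 / (?m + 2) = (?m + 1) / (?m + 2)"
    by (simp add: field_simps)
  ultimately show False by linarith
qed

end
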